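(* Let $\mathcal A=\{0,1\}^d\subset\mathbb R^d$ be the vertex set of the unit cube. Then $\mathrm{PWidth}(\mathcal A)=1/\sqrt d$.
   Context: Euclidean norm and inner product. For a finite set $\mathcal B\subseteq\mathbb R^d$ and $x\in\mathrm{conv}(\mathcal B)$, $\mathcal S_x(\mathcal B)$ is the family of subsets $S\subseteq\mathcal B$ such that $x$ is a proper convex combination of all elements of $S$ (all coefficients positive). For $r\ne0$, $\mathrm{PdirW}(\mathcal B,r,x):=\min_{S\in\mathcal S_x(\mathcal B)}\max_{s\in\mathcal B,\,v\in S}\langle r/\|r\|,s-v\rangle$. The pyramidal width is $\mathrm{PWidth}(\mathcal A):=\inf\{\mathrm{PdirW}(\mathcal K\cap\mathcal A,r,x)\}$ over all nonempty faces $\mathcal K$ of $\mathrm{conv}(\mathcal A)$ (including $\mathrm{conv}(\mathcal A)$ itself), all $x\in\mathcal K$, and all $r\in\mathrm{cone}(\mathcal K-x)\setminus\{0\}$, where $\mathrm{cone}(\mathcal K-x)=\{\sum_i\lambda_i(y_i-x):\lambda_i\ge0,\ y_i\in\mathcal K\}$. *)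

theory Defs
  imports "HOL-Analysis.Analysis"
begin

definition proper_supports :: "'a::euclidean_space set \<Rightarrow> 'a \<Rightarrow> 'a set set" where
  "proper_supports B x = {S. S \<subseteq> B \<and> (\<exists>c::'a \<Rightarrow> real.
      (\<forall>s\<in>S. c s > 0) \<and> sum c S = 1 \<and> (\<Sum>s\<in>S. c s *\<^sub>R s) = x)}"

definition PdirW :: "'a::euclidean_space set \<Rightarrow> 'a \<Rightarrow> 'a \<Rightarrow> real" where
  "PdirW B r x = Inf ((\<lambda>S. Sup {(r /\<^sub>R norm r) \<bullet> (s - v) | s v. s \<in> B \<and> v \<in> S})
                       ` proper_supports B x)"

definition cone_diff :: "'a::euclidean_space set \<Rightarrow> 'a \<Rightarrow> 'a set" where
  "cone_diff K x = {z. \<exists>F (l::'a \<Rightarrow> real). finite F \<and> F \<subseteq> K \<and> (\<forall>y\<in>F. l y \<ge> 0)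
                        \<and> z = (\<Sum>y\<in>F. l y *\<^sub>R (y - x))}"

definition PWidth :: "'a::euclidean_space set \<Rightarrow> real" where
  "PWidth A = Inf {PdirW (K \<inter> A) r x | K x r.
      K face_of convex hull A \<and> K \<noteq> {} \<and> x \<in> K \<and> r \<in> cone_diff K x \<and> r \<noteq> 0}"

definition unit_cube_vertices :: "'a::euclidean_space set" where
  "unit_cube_vertices = {v. \<forall>i\<in>Basis. v \<bullet> i = 0 \<or> v \<bullet> i = 1}"

end

theory Submission
  imports Defs
begin

text \<open>
  Lower bound: given a face \<open>K\<close>, a direction \<open>r\<close> in the cone of \<open>K\<close> at \<open>x\<close> and a proper
  support \<open>S\<close> of \<open>x\<close>, pick a coordinate \<open>i\<close> with \<open>\<bar>r\<^sub>i\<bar>\<close> maximal, so that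
  \<open>\<parallel>r\<parallel> \<le> \<surd>d \<bar>r\<^sub>i\<bar>\<close>. Say \<open>r\<^sub>i > 0\<close>. Then some \<open>y \<in> K\<close> has \<open>y\<^sub>i > x\<^sub>i\<close> and some \<open>v \<in> S\<close> has
  \<open>v\<^sub>i \<le> x\<^sub>i\<close>, hence \<open>v\<^sub>i = 0\<close>. Since \<open>K\<close> is a face of the cube containing \<open>v\<close> and a point
  differing from \<open>v\<close> in coordinate \<open>i\<close>, it contains the vertex \<open>s = v + e\<^sub>i\<close>, and
  \<open>\<langle>r/\<parallel>r\<parallel>, s - v\<rangle> = r\<^sub>i/\<parallel>r\<parallel> \<ge> 1/\<surd>d\<close>.

  Upper bound: take the whole cube, \<open>x = (1 - 1/d)\<one>\<close>, \<open>r = \<one>\<close> and the support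
  \<open>S = {\<one> - e\<^sub>j}\<close>; then \<open>\<langle>\<one>, s - v\<rangle> \<le> d - (d - 1) = 1\<close> for every vertex \<open>s\<close> and \<open>v \<in> S\<close>.
\<close>

lemma convex_hull_unit_cube_vertices:
  "convex hull unit_cube_vertices = cbox (0::'a::euclidean_space) One"
  by (simp add: unit_interval_convex_hull unit_cube_vertices_def)

lemma finite_unit_cube_vertices: "finite (unit_cube_vertices :: 'a::euclidean_space set)"
proof (rule finite_subset)
  show "unit_cube_vertices \<subseteq> (\<lambda>I. \<Sum>i\<in>I. i) ` Pow (Basis::'a set)"
  proof
    fix v :: 'a assume "v \<in> unit_cube_vertices"
    then have "v = (\<Sum>i\<in>{i\<in>Basis. v \<bullet> i = 1}. i)"
      by (subst euclidean_eq_iff) (auto simp: unit_cube_vertices_def inner_sum_left inner_Basis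
            sum.delta if_distrib[of "\<lambda>x. x \<bullet> _"] cong: if_cong)
    then show "v \<in> (\<lambda>I. \<Sum>i\<in>I. i) ` Pow Basis" by blast
  qed
qed simp

lemma unit_cube_vertices_flip:
  fixes v :: "'a::euclidean_space"
  assumes "v \<in> unit_cube_vertices" "i \<in> Basis"
  shows "v + (1 - 2 * (v \<bullet> i)) *\<^sub>R i \<in> unit_cube_vertices"
  using assms by (auto simp: unit_cube_vertices_def inner_simps inner_Basis)

lemma inner_One_One: "One \<bullet> (One::'a::euclidean_space) = real DIM('a)"
  by (simp add: inner_sum_right)

lemma norm_One: "norm (One::'a::euclidean_space) = sqrt (real DIM('a))"
  by (simp add: norm_eq_sqrt_inner inner_One_One)

lemma inner_One_unit_cube_vertex_le:
  fixes v :: "'a::euclidean_space"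
  assumes "v \<in> unit_cube_vertices"
  shows "One \<bullet> v \<le> real DIM('a)"
proof -
  have "One \<bullet> v = (\<Sum>i\<in>Basis. i \<bullet> v)" by (simp add: inner_sum_left)
  also have "\<dots> \<le> (\<Sum>i\<in>(Basis::'a set). 1)"
    using assms by (intro sum_mono) (force simp: unit_cube_vertices_def inner_commute)
  finally show ?thesis by simp
qed

lemma One_in_unit_cube_vertices: "One \<in> unit_cube_vertices"
  by (simp add: unit_cube_vertices_def)

lemma face_of_convex_hull_finite_eq:
  fixes K :: "'a::euclidean_space set"
  assumes "finite A" "K face_of convex hull A"
  shows "K = convex hull (K \<inter> A)"
proof
  obtain A' where "A' \<subseteq> A" "K = convex hull A'"
    using face_of_convex_hull_subset[OF finite_imp_compact[OF assms(1)] assms(2)] by blast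
  then show "K \<subseteq> convex hull (K \<inter> A)"
    by (metis hull_mono hull_subset inf.bounded_iff)
  show "convex hull (K \<inter> A) \<subseteq> K"
    using assms(2) by (simp add: face_of_imp_convex hull_minimal)
qed

lemma proper_supports_nonempty:
  assumes "finite B" "x \<in> convex hull B"
  shows "proper_supports B x \<noteq> {}"
proof -
  obtain u where u: "\<forall>y\<in>B. 0 \<le> u y" "sum u B = 1" "(\<Sum>y\<in>B. u y *\<^sub>R y) = x"
    using assms by (auto simp: convex_hull_finite)
  define S where "S = {y \<in> B. u y \<noteq> 0}"
  have "sum u S = sum u B" "(\<Sum>y\<in>S. u y *\<^sub>R y) = (\<Sum>y\<in>B. u y *\<^sub>R y)"
    using assms(1) unfolding S_def by (auto intro: sum.mono_neutral_left)
  moreover have "\<forall>s\<in>S. 0 < u s" "S \<subseteq> B"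
    using u(1) unfolding S_def by force+
  ultimately have "S \<in> proper_supports B x"
    using u unfolding proper_supports_def by auto
  then show ?thesis by blast
qed

lemma proper_supports_inner_le:
  assumes "S \<in> proper_supports B x"
  shows "\<exists>v\<in>S. u \<bullet> v \<le> u \<bullet> x"
proof (rule ccontr)
  obtain c where c: "\<forall>s\<in>S. 0 < c s" "sum c S = 1" "(\<Sum>s\<in>S. c s *\<^sub>R s) = x"
    using assms unfolding proper_supports_def by blast
  then have S: "finite S" "S \<noteq> {}"
    by (metis sum.infinite zero_neq_one, metis sum.empty zero_neq_one)
  assume "\<not> ?thesis"
  then have "(\<Sum>s\<in>S. c s * (u \<bullet> x)) < (\<Sum>s\<in>S. c s * (u \<bullet> s))"
    using S c(1) by (intro sum_strict_mono) auto
  also have "\<dots> = u \<bullet> x"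
    using c(3) by (auto simp: inner_sum_right)
  finally show False
    using c(2) by (simp add: sum_distrib_right[symmetric])
qed

lemma cone_diff_inner_pos:
  assumes "r \<in> cone_diff K x" "0 < u \<bullet> r"
  shows "\<exists>y\<in>K. u \<bullet> x < u \<bullet> y"
proof (rule ccontr)
  obtain F l where F: "F \<subseteq> K" "\<forall>y\<in>F. 0 \<le> l y" "r = (\<Sum>y\<in>F. l y *\<^sub>R (y - x))"
    using assms(1) unfolding cone_diff_def by blast
  assume "\<not> ?thesis"
  then have "(\<Sum>y\<in>F. l y * (u \<bullet> y - u \<bullet> x)) \<le> 0"
    using F(1,2) by (intro sum_nonpos) (force simp: mult_nonneg_nonpos)
  then show False
    using assms(2) F(3) by (simp add: inner_sum_right inner_diff_right)
qed

lemma exists_Basis_norm_le_sqrt_DIM: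
  fixes r :: "'a::euclidean_space"
  shows "\<exists>i\<in>Basis. norm r \<le> sqrt (real DIM('a)) * \<bar>r \<bullet> i\<bar>"
proof -
  have "(MAX j\<in>Basis. \<bar>r \<bullet> j\<bar>) \<in> (\<lambda>j. \<bar>r \<bullet> j\<bar>) ` Basis"
    by (rule Max_in) auto
  then obtain i where i: "i \<in> Basis" "(MAX j\<in>Basis. \<bar>r \<bullet> j\<bar>) = \<bar>r \<bullet> i\<bar>"
    by (rule imageE)
  have max: "\<bar>r \<bullet> j\<bar> \<le> \<bar>r \<bullet> i\<bar>" if "j \<in> Basis" for j
    unfolding i(2)[symmetric] using that by (intro Max_ge) auto
  have "norm r = sqrt (\<Sum>j\<in>Basis. (r \<bullet> j)\<^sup>2)"
    unfolding norm_eq_sqrt_inner euclidean_inner[of r r] power2_eq_square ..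
  also have "\<dots> \<le> sqrt (\<Sum>j\<in>(Basis::'a set). (r \<bullet> i)\<^sup>2)"
    using max by (intro real_sqrt_le_mono sum_mono) (simp add: abs_le_square_iff)
  also have "\<dots> = sqrt (real DIM('a)) * \<bar>r \<bullet> i\<bar>"
    by (simp add: real_sqrt_mult)
  finally show ?thesis using i(1) by blast
qed

lemma face_of_unit_cube_flip:
  fixes K :: "'a::euclidean_space set"
  assumes K: "K face_of cbox 0 One" and v: "v \<in> K" "v \<in> unit_cube_vertices"
    and z: "z \<in> K" and i: "i \<in> Basis" "z \<bullet> i \<noteq> v \<bullet> i"
  shows "v + (1 - 2 * (v \<bullet> i)) *\<^sub>R i \<in> K"
proof -
  \<comment> \<open>The midpoint \<open>p\<close> of \<open>v\<close> and \<open>z\<close> splits as \<open>(1 - \<alpha>) q + \<alpha> w\<close> with \<open>q\<close> in the cube and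
    \<open>q \<bullet> i = v \<bullet> i\<close>; as \<open>K\<close> is a face, the flipped vertex \<open>w\<close> must lie in \<open>K\<close>.\<close>
  define w where "w = v + (1 - 2 * (v \<bullet> i)) *\<^sub>R i"
  define \<alpha> where "\<alpha> = \<bar>z \<bullet> i - v \<bullet> i\<bar> / 2"
  define p where "p = (1/2) *\<^sub>R v + (1/2) *\<^sub>R z"
  define q where "q = (1 / (1 - \<alpha>)) *\<^sub>R (p - \<alpha> *\<^sub>R w)"
  have zj: "0 \<le> z \<bullet> j" "z \<bullet> j \<le> 1" if "j \<in> Basis" for j
    using z face_of_imp_subset[OF K] that by (auto simp: mem_box)
  have vj: "v \<bullet> j = 0 \<or> v \<bullet> j = 1" if "j \<in> Basis" for j
    using v(2) that by (simp add: unit_cube_vertices_def)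
  have \<alpha>: "0 < \<alpha>" "\<alpha> \<le> 1/2"
    using i zj[OF i(1)] vj[OF i(1)] unfolding \<alpha>_def by auto
  have "p \<in> K"
    unfolding p_def by (rule convexD[OF face_of_imp_convex[OF K] v(1) z]) auto
  moreover have "w \<in> cbox 0 One"
    using unit_cube_vertices_flip[OF v(2) i(1)] unfolding w_def
    by (metis convex_hull_unit_cube_vertices hull_inc)
  moreover have "q \<in> cbox 0 One"
    unfolding mem_box
  proof
    fix j :: 'a assume j: "j \<in> Basis"
    have qj: "q \<bullet> j = ((v \<bullet> j + z \<bullet> j) / 2 - \<alpha> * (w \<bullet> j)) / (1 - \<alpha>)"
      unfolding q_def p_def by (simp add: inner_simps)
    show "0 \<bullet> j \<le> q \<bullet> j \<and> q \<bullet> j \<le> One \<bullet> j"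
    proof (cases "j = i")
      case True
      have "w \<bullet> i = 1 - v \<bullet> i"
        using i(1) by (simp add: w_def inner_simps inner_Basis)
      then have "q \<bullet> j = ((v \<bullet> i + z \<bullet> i) / 2 - \<alpha> * (1 - v \<bullet> i)) / (1 - \<alpha>)"
        using qj True by simp
      also have "\<dots> = v \<bullet> i"
        using vj[OF i(1)] zj[OF i(1)] \<alpha> unfolding \<alpha>_def by (auto simp: divide_simps)
      finally have "q \<bullet> j = v \<bullet> i" .
      then show ?thesis using True i(1) vj[OF i(1)] by auto
    next
      case False
      then have "q \<bullet> j = ((v \<bullet> j + z \<bullet> j) / 2 - \<alpha> * (v \<bullet> j)) / (1 - \<alpha>)"
        using qj i j unfolding w_def by (simp add: inner_simps inner_Basis)
      also have "\<dots> \<in> {0..1}"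
        using vj[OF j] zj[OF j] \<alpha> by (auto simp: divide_simps)
      finally show ?thesis using j by simp
    qed
  qed
  moreover have "p = (1 - \<alpha>) *\<^sub>R q + \<alpha> *\<^sub>R w"
    using \<alpha> unfolding q_def by simp
  ultimately show ?thesis
  proof (cases "q = w")
    case False
    then have "p \<in> open_segment q w"
      using \<open>p = (1 - \<alpha>) *\<^sub>R q + \<alpha> *\<^sub>R w\<close> \<alpha> by (auto simp: in_segment)
    then show ?thesis
      using face_ofD[OF K] \<open>p \<in> K\<close> \<open>q \<in> cbox 0 One\<close> \<open>w \<in> cbox 0 One\<close>
      unfolding w_def by blast
  next
    case True
    then have "p = w"
      using \<open>p = (1 - \<alpha>) *\<^sub>R q + \<alpha> *\<^sub>R w\<close> by (simp add: scaleR_collapse)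
    then show ?thesis
      using \<open>p \<in> K\<close> unfolding w_def by simp
  qed
qed

definition support_width :: "'a::euclidean_space set \<Rightarrow> 'a \<Rightarrow> 'a set \<Rightarrow> real" where
  "support_width B r S = Sup {(r /\<^sub>R norm r) \<bullet> (s - v) | s v. s \<in> B \<and> v \<in> S}"

lemma PdirW_eq_Inf_support_width:
  "PdirW B r x = Inf (support_width B r ` proper_supports B x)"
  unfolding PdirW_def support_width_def ..

lemma support_width_ge:
  assumes "finite B" "S \<subseteq> B" "s \<in> B" "v \<in> S"
  shows "(r /\<^sub>R norm r) \<bullet> (s - v) \<le> support_width B r S"
  unfolding support_width_def
proof (rule cSup_upper)
  have "finite {s. s \<in> B}" "finite {v. v \<in> S}"
    using assms(1,2) finite_subset by auto
  then show "bdd_above {(r /\<^sub>R norm r) \<bullet> (s - v) | s v. s \<in> B \<and> v \<in> S}"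
    by (intro bdd_above_finite finite_image_set2)
qed (use assms(3,4) in blast)

lemma support_width_le:
  assumes "B \<noteq> {}" "S \<noteq> {}" "\<And>s v. s \<in> B \<Longrightarrow> v \<in> S \<Longrightarrow> (r /\<^sub>R norm r) \<bullet> (s - v) \<le> c"
  shows "support_width B r S \<le> c"
  unfolding support_width_def using assms by (intro cSup_least) blast+

lemma unit_cube_support_pair:
  fixes K :: "'a::euclidean_space set"
  assumes K: "K face_of cbox 0 One" and r: "r \<in> cone_diff K x"
    and S: "S \<in> proper_supports (K \<inter> unit_cube_vertices) x"
    and i: "i \<in> Basis" "r \<bullet> i \<noteq> 0"
  shows "\<exists>s\<in>K \<inter> unit_cube_vertices. \<exists>v\<in>S. r \<bullet> (s - v) = \<bar>r \<bullet> i\<bar>"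
proof -
  have SA: "S \<subseteq> K \<inter> unit_cube_vertices"
    using S by (simp add: proper_supports_def)
  have vi: "v \<bullet> i = 0 \<or> v \<bullet> i = 1" if "v \<in> S" for v
    using SA that i(1) by (auto simp: unit_cube_vertices_def)
  have yi: "0 \<le> y \<bullet> i \<and> y \<bullet> i \<le> 1" if "y \<in> K" for y
    using face_of_imp_subset[OF K] that i(1) by (auto simp: mem_box)
  obtain v y where v: "v \<in> S" "y \<in> K" "y \<bullet> i \<noteq> v \<bullet> i"
    and sgn: "(1 - 2 * (v \<bullet> i)) * (r \<bullet> i) = \<bar>r \<bullet> i\<bar>"
  proof (cases "0 < r \<bullet> i")
    case True
    obtain y where "y \<in> K" "x \<bullet> i < y \<bullet> i"
      using cone_diff_inner_pos[OF r, of i] True by (auto simp: inner_commute)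
    moreover obtain v where "v \<in> S" "v \<bullet> i \<le> x \<bullet> i"
      using proper_supports_inner_le[OF S, of i] by (auto simp: inner_commute)
    ultimately show thesis
      using that[of v y] True vi yi by force
  next
    case False
    obtain y where "y \<in> K" "y \<bullet> i < x \<bullet> i"
      using cone_diff_inner_pos[OF r, of "- i"] False i(2) by (auto simp: inner_commute)
    moreover obtain v where "v \<in> S" "x \<bullet> i \<le> v \<bullet> i"
      using proper_supports_inner_le[OF S, of "- i"] by (auto simp: inner_commute)
    ultimately show thesis
      using that[of v y] False vi yi by force
  qed
  define s where "s = v + (1 - 2 * (v \<bullet> i)) *\<^sub>R i"
  have "s \<in> K \<inter> unit_cube_vertices"
    using face_of_unit_cube_flip[OF K _ _ v(2) i(1) v(3)] unit_cube_vertices_flip[OF _ i(1)]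
      SA v(1) unfolding s_def by blast
  moreover have "r \<bullet> (s - v) = \<bar>r \<bullet> i\<bar>"
    using sgn unfolding s_def by (simp add: inner_simps mult.commute)
  ultimately show ?thesis using v(1) by blast
qed

lemma support_width_unit_cube_ge:
  fixes K :: "'a::euclidean_space set"
  assumes K: "K face_of cbox 0 One" and r: "r \<in> cone_diff K x" "r \<noteq> 0"
    and S: "S \<in> proper_supports (K \<inter> unit_cube_vertices) x"
  shows "1 / sqrt (real DIM('a)) \<le> support_width (K \<inter> unit_cube_vertices) r S"
proof -
  obtain i where i: "i \<in> Basis" and nr: "norm r \<le> sqrt (real DIM('a)) * \<bar>r \<bullet> i\<bar>"
    using exists_Basis_norm_le_sqrt_DIM by blast
  have ri: "0 < \<bar>r \<bullet> i\<bar>"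
    using nr r(2) by (cases "r \<bullet> i = 0") auto
  then obtain s v where sv: "s \<in> K \<inter> unit_cube_vertices" "v \<in> S" "r \<bullet> (s - v) = \<bar>r \<bullet> i\<bar>"
    using unit_cube_support_pair[OF K r(1) S i] by auto
  have "1 / sqrt (real DIM('a)) = \<bar>r \<bullet> i\<bar> / (sqrt (real DIM('a)) * \<bar>r \<bullet> i\<bar>)"
    using ri by simp
  also have "\<dots> \<le> \<bar>r \<bullet> i\<bar> / norm r"
    using ri nr r(2) by (intro divide_left_mono) auto
  also have "\<dots> = (r /\<^sub>R norm r) \<bullet> (s - v)"
    using sv(3) by (simp add: divide_inverse_commute)
  also have "\<dots> \<le> support_width (K \<inter> unit_cube_vertices) r S"
    using S sv(1,2) finite_unit_cube_vertices
    by (intro support_width_ge) (auto simp: proper_supports_def)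
  finally show ?thesis .
qed

lemma PdirW_unit_cube_ge:
  fixes K :: "'a::euclidean_space set"
  assumes K: "K face_of convex hull unit_cube_vertices" and x: "x \<in> K"
    and r: "r \<in> cone_diff K x" "r \<noteq> 0"
  shows "1 / sqrt (real DIM('a)) \<le> PdirW (K \<inter> unit_cube_vertices) r x"
  unfolding PdirW_eq_Inf_support_width
proof (rule cInf_greatest)
  have "x \<in> convex hull (K \<inter> unit_cube_vertices)"
    using face_of_convex_hull_finite_eq[OF finite_unit_cube_vertices K] x by simp
  then show "support_width (K \<inter> unit_cube_vertices) r ` proper_supports (K \<inter> unit_cube_vertices) x \<noteq> {}"
    using proper_supports_nonempty finite_unit_cube_vertices by blast
qed (use support_width_unit_cube_ge K r in \<open>auto simp: convex_hull_unit_cube_vertices\<close>)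

lemma unit_cube_diagonal_support:
  "(\<lambda>j. One - j) ` Basis
     \<in> proper_supports unit_cube_vertices ((1 - 1 / real DIM('a)) *\<^sub>R (One::'a::euclidean_space))"
proof -
  let ?d = "real DIM('a)" and ?S = "(\<lambda>j. (One::'a) - j) ` Basis"
  have inj: "inj_on (\<lambda>j. (One::'a) - j) Basis" by (rule inj_onI) simp
  have "?S \<subseteq> unit_cube_vertices"
    by (auto simp: unit_cube_vertices_def inner_simps inner_Basis split: if_splits)
  moreover have "(\<Sum>v\<in>?S. 1 / ?d) = 1"
    by (simp add: card_image[OF inj])
  moreover have "(\<Sum>v\<in>?S. (1 / ?d) *\<^sub>R v) = (1 - 1 / ?d) *\<^sub>R One"
  proof -
    have "(\<Sum>v\<in>?S. (1 / ?d) *\<^sub>R v) = (1 / ?d) *\<^sub>R (\<Sum>j\<in>Basis. One - j)"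
      using sum.reindex[OF inj, of "\<lambda>v. (1 / ?d) *\<^sub>R v"] by (simp add: scaleR_sum_right o_def)
    also have "\<dots> = (1 / ?d) *\<^sub>R (?d *\<^sub>R One - One)"
      by (simp add: sum_subtractf sum_constant_scaleR)
    also have "\<dots> = (1 - 1 / ?d) *\<^sub>R One"
      by (simp add: algebra_simps)
    finally show ?thesis .
  qed
  moreover have "\<forall>v\<in>?S. 0 < 1 / ?d"
    by simp
  ultimately show ?thesis
    unfolding proper_supports_def by (intro CollectI conjI exI[of _ "\<lambda>_. 1 / ?d"])
qed

lemma One_mem_cone_diff_diagonal:
  "One \<in> cone_diff (cbox 0 One) ((1 - 1 / real DIM('a)) *\<^sub>R (One::'a::euclidean_space))"
  unfolding cone_diff_def
  by (intro CollectI exI[of _ "{One}"] exI[of _ "\<lambda>_. real DIM('a)"]) (auto simp: algebra_simps mem_box)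

lemma PdirW_unit_cube_diagonal_le:
  "PdirW (convex hull unit_cube_vertices \<inter> unit_cube_vertices) One
     ((1 - 1 / real DIM('a)) *\<^sub>R (One::'a::euclidean_space)) \<le> 1 / sqrt (real DIM('a))"
proof -
  let ?A = "unit_cube_vertices :: 'a set" and ?d = "real DIM('a)"
  let ?x = "(1 - 1 / ?d) *\<^sub>R (One::'a)" and ?S = "(\<lambda>j. One - j) ` (Basis::'a set)"
  have A: "cbox 0 One \<inter> ?A = ?A"
    using hull_subset[of ?A convex] by (auto simp: convex_hull_unit_cube_vertices)
  have "support_width ?A One ?S \<le> 1 / sqrt ?d"
  proof (rule support_width_le)
    fix s v assume "s \<in> ?A" "v \<in> ?S"
    then obtain j where j: "j \<in> Basis" "v = One - j" and s: "One \<bullet> s \<le> ?d"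
      using inner_One_unit_cube_vertex_le by blast
    have "One \<bullet> v = ?d - 1"
      using j by (simp add: inner_diff_right inner_One_One)
    then have "(One /\<^sub>R norm (One::'a)) \<bullet> (s - v) = (One \<bullet> s - (?d - 1)) / sqrt ?d"
      by (simp add: norm_One inner_diff_right field_simps)
    also have "\<dots> \<le> 1 / sqrt ?d"
      using s by (intro divide_right_mono) auto
    finally show "(One /\<^sub>R norm (One::'a)) \<bullet> (s - v) \<le> 1 / sqrt ?d" .
  qed (use One_in_unit_cube_vertices in auto)
  moreover have "cbox 0 (One::'a) face_of cbox 0 One"
    by (rule face_of_refl) (rule convex_box)
  from support_width_unit_cube_ge[OF this One_mem_cone_diff_diagonal One_neq_0, unfolded A]
  have "bdd_below (support_width ?A One ` proper_supports ?A ?x)"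
    by (intro bdd_belowI[of _ "1 / sqrt ?d"]) auto
  ultimately show ?thesis
    unfolding convex_hull_unit_cube_vertices A PdirW_eq_Inf_support_width
    using unit_cube_diagonal_support by (intro cInf_lower2) auto
qed

theorem lemma1:
  shows "PWidth (unit_cube_vertices :: 'a::euclidean_space set) = 1 / sqrt (real DIM('a))"
proof -
  let ?A = "unit_cube_vertices :: 'a set"
  let ?x = "(1 - 1 / real DIM('a)) *\<^sub>R (One::'a)"
  have x: "?x \<in> convex hull ?A"
    unfolding convex_hull_unit_cube_vertices mem_box
    by (auto simp: inner_simps field_simps)
  have cone: "One \<in> cone_diff (convex hull ?A) ?x"
    using One_mem_cone_diff_diagonal by (simp add: convex_hull_unit_cube_vertices)
  have face: "convex hull ?A face_of convex hull ?A"
    by (simp add: face_of_refl)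
  have diagonal: "PdirW (convex hull ?A \<inter> ?A) One ?x = 1 / sqrt (real DIM('a))"
    using PdirW_unit_cube_diagonal_le PdirW_unit_cube_ge[OF face x cone One_neq_0]
    by (rule order.antisym)
  show ?thesis
    unfolding PWidth_def
  proof (rule cInf_eq_minimum)
    fix t assume "t \<in> {PdirW (K \<inter> ?A) r x | K x r. K face_of convex hull ?A \<and> K \<noteq> {}
                    \<and> x \<in> K \<and> r \<in> cone_diff K x \<and> r \<noteq> 0}"
    then show "1 / sqrt (real DIM('a)) \<le> t"
      using PdirW_unit_cube_ge by blast
  qed (use face x cone diagonal in force)
qed

end
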